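(* Let $F\in Sh^{s,0}_{\Lambda_L}(X)\cap Mod(X)$ be reduced, given by data $(V,\rho,W_s,\rho_s,T_s)$, and let $R$ be the matrix of standard cord values of $\epsilon_F=\epsilon_{(F,f)}$ for a local trivialization $f$. (1) If $\rho(m_s)=\mathrm{id}_V$ for the meridian $m_s$ of $K_s$, then $R_j=0$ for all $j$ with $\{j\}=s$. (2) If $F$ is stable, then $R^i\neq0$ for all $1\le i\le n$.
   Context: $X=\mathbb{R}^3$ or $S^3$, $k$ a field, $(L,L')$ an $r$-component framed oriented link, $L=K_1\sqcup\dots\sqcup K_r$, $\pi_L=\pi_1(X\setminus L)$. $L$ is the closure of an $n$-strand braid $B$; a disk $D$ transverse to the braid meets $L$ at $y_1,\dots,y_n$ and the framing at $x_1,\dots,x_n$; strand $i$ lies on component $K_{\{i\}}$. The standard cord $\gamma_{ij}$ is the straight segment in $D$ from $x_i$ to $x_j$; for an augmentation $\epsilon$ of the framed cord algebra, $R$ is the $n\times n$ matrix $R_{ij}=\epsilon(\gamma_{ij})$, with columns $R_j$ and rows $R^i$. Sheaves in $Sh^{s,0}_{\Lambda_L}(X)\cap Mod(X)$ (sheaves of $k$-vector spaces with micro-support at infinity in the unit conormal of $L$, microlocally simple with Morse cone in degree $0$) are equivalent to data $(V,\rho,W_s,\rho_s,T_s)$: $\rho:\pi_L\to GL(V)$ the local system on the complement, $W_s$ the stalk on $K_s$, $T_s:W_s\to V$ injective with one-dimensional cokernel (meridian of $K_s$ acting trivially on its image, longitude compatible with the monodromy of $K_s$); we view $W_s\subset V$;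 stalks at the $x_i$ are identified with $V$ via the standard cords, and $W_i\subset V$ denotes the stalk at $y_i$. $F$ is reduced if it admits no nonzero locally constant subsheaf, no nonzero locally constant quotient, and no direct summand that is the kernel of a surjection from a nonzero locally constant sheaf onto $i'_*k_{L''}$ for a sublink $L''$. With $V_0=\sum_t\mathrm{im}(\mathrm{id}_V-\rho(m_t))$ (sum over meridian generators) and $F_0\subset F$ the subsheaf with data $(V_0,\rho|_{V_0},W_s\cap V_0,\dots)$, $F$ is stable if $\Gamma(X,F)=0$ and $F=F_0$. A local trivialization is a tuple of surjections $f_i:V\to k$ with $\ker f_i\supseteq W_i$; $\epsilon_{(F,f)}(\gamma_{ij})=f_i\circ(\mathrm{id}_V-\rho(m_j))\circ f_j^{-1}$ with $f_j^{-1}$ a right inverse of $f_j$ and $m_j$ the meridian of strand $j$ at $x_j$ (more generally $\epsilon(c_{st})=f_sA_{c_{st}}(\mathrm{id}_V-M_t)f_t^{-1}$, $\epsilon(\lambda_s)=f_sA_{\ell_s}f_s^{-1}$, $\epsilon(\mu_s)=1-f_s(\mathrm{id}_V-M_s)f_s^{-1}$). *)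

theory Defs
  imports Complex_Main
begin

text \<open>An n-strand braid word: a list of Artin generators (k, b), meaning
sigma_k (b = True) or sigma_k inverse (b = False), 0 <= k, k+1 < n, acting on
strands 0..n-1 (strand i of the paper is strand i-1 here).\<close>

definition valid_braid :: "nat \<Rightarrow> (nat \<times> bool) list \<Rightarrow> bool" where
  "valid_braid n B \<longleftrightarrow> (\<forall>(k, b) \<in> set B. Suc k < n)"

definition swap_adj :: "nat \<Rightarrow> nat \<Rightarrow> nat" where
  "swap_adj k x = (if x = k then Suc k else if x = Suc k then k else x)"

definition braid_perm :: "(nat \<times> bool) list \<Rightarrow> nat \<Rightarrow> nat" where
  "braid_perm B = fold (\<lambda>(k, b) p. swap_adj k \<circ> p) B id"

text \<open>Strands i and j lie on the same component of the closure of B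
(components = cycles of the underlying permutation).\<close>
definition same_comp :: "(nat \<times> bool) list \<Rightarrow> nat \<Rightarrow> nat \<Rightarrow> bool" where
  "same_comp B i j \<longleftrightarrow> (\<exists>m. (braid_perm B ^^ m) i = j)"

text \<open>Data on the disk D: M i = rho(m_i), the monodromy of the meridian m_i of
strand i based at x_i (stalk at x_i identified with V via the standard cords);
W i \<subseteq> V the stalk at y_i.  A generator acts by the Artin (Hurwitz) action:
sigma_k sends (M_k, M_(k+1)) to (M_k M_(k+1) M_k^-1, M_k) and
(W_k, W_(k+1)) to (M_k W_(k+1), W_k); sigma_k^-1 is the inverse action.\<close>

definition gen_act :: "nat \<times> bool \<Rightarrow> (nat \<Rightarrow> 'v \<Rightarrow> 'v) \<times> (nat \<Rightarrow> 'v set)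
    \<Rightarrow> (nat \<Rightarrow> 'v \<Rightarrow> 'v) \<times> (nat \<Rightarrow> 'v set)" where
  "gen_act g MW = (case g of (k, b) \<Rightarrow> (case MW of (M, W) \<Rightarrow>
     (if b then
        (M(k := M k \<circ> M (Suc k) \<circ> inv (M k), Suc k := M k),
         W(k := M k ` W (Suc k), Suc k := W k))
      else
        (M(k := M (Suc k), Suc k := inv (M (Suc k)) \<circ> M k \<circ> M (Suc k)),
         W(k := W (Suc k), Suc k := inv (M (Suc k)) ` W k)))))"

definition braid_act :: "(nat \<times> bool) list \<Rightarrow> (nat \<Rightarrow> 'v \<Rightarrow> 'v) \<times> (nat \<Rightarrow> 'v set)
    \<Rightarrow> (nat \<Rightarrow> 'v \<Rightarrow> 'v) \<times> (nat \<Rightarrow> 'v set)" where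
  "braid_act B MW = fold gen_act B MW"

definition hyperplane :: "('k::field \<Rightarrow> 'v::ab_group_add \<Rightarrow> 'v) \<Rightarrow> 'v set \<Rightarrow> bool" where
  "hyperplane scale H \<longleftrightarrow>
     (\<exists>\<phi>. Vector_Spaces.linear scale ((*) :: 'k \<Rightarrow> 'k \<Rightarrow> 'k) \<phi> \<and> surj \<phi> \<and> H = {v. \<phi> v = 0})"

text \<open>Objects of Sh^{s,0}_{Lambda_L}(X) \<inter> Mod(X) for L the closure of B, in terms
of the data (V, rho, W_s, rho_s, T_s): rho is a representation of
pi_L = < x_1..x_n | x_i = phi_B(x_i) > (all M i invertible linear, fixed by the
braid action), W_i are hyperplanes (one-dimensional cokernel of T_s) on which
the meridian acts trivially, and the W_i are consistently transported along
the braid (this encodes the local system on each K_s and the compatibility of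
its monodromy rho_s with rho(longitude)).\<close>
definition sheaf_data :: "('k::field \<Rightarrow> 'v::ab_group_add \<Rightarrow> 'v) \<Rightarrow> nat \<Rightarrow> (nat \<times> bool) list
    \<Rightarrow> (nat \<Rightarrow> 'v \<Rightarrow> 'v) \<Rightarrow> (nat \<Rightarrow> 'v set) \<Rightarrow> bool" where
  "sheaf_data scale n B M W \<longleftrightarrow>
     (\<forall>i<n. Vector_Spaces.linear scale scale (M i) \<and> bij (M i)) \<and>
     (\<forall>i<n. hyperplane scale (W i)) \<and>
     (\<forall>i<n. \<forall>w\<in>W i. M i w = w) \<and>
     braid_act B (M, W) = (M, W)"

text \<open>Global sections Gamma(X, F): flat sections of the local system lying in
every stalk along the link.\<close>
definition global_sections :: "nat \<Rightarrow> (nat \<Rightarrow> 'v \<Rightarrow> 'v) \<Rightarrow> (nat \<Rightarrow> 'v set) \<Rightarrow> 'v set" where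
  "global_sections n M W = {v. (\<forall>j<n. M j v = v) \<and> (\<forall>i<n. v \<in> W i)}"

text \<open>X is simply connected, so locally constant sheaves are constant.
A nonzero locally constant subsheaf: nonzero subspace U fixed pointwise by rho
and contained in all stalks W_i.\<close>
definition has_lc_sub :: "('k::field \<Rightarrow> 'v::ab_group_add \<Rightarrow> 'v) \<Rightarrow> nat \<Rightarrow> (nat \<Rightarrow> 'v \<Rightarrow> 'v)
    \<Rightarrow> (nat \<Rightarrow> 'v set) \<Rightarrow> bool" where
  "has_lc_sub scale n M W \<longleftrightarrow>
     (\<exists>U. module.subspace scale U \<and> U \<noteq> {0} \<and>
          (\<forall>j<n. \<forall>u\<in>U. M j u = u) \<and> (\<forall>i<n. U \<subseteq> W i))"

text \<open>A nonzero locally constant quotient F -> Q_X, described by its kernel K on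
the complement: a proper subspace containing all im(id - rho(m_j)) (so rho acts
trivially on V/K) such that each stalk W_i surjects onto V/K.\<close>
definition has_lc_quot :: "('k::field \<Rightarrow> 'v::ab_group_add \<Rightarrow> 'v) \<Rightarrow> nat \<Rightarrow> (nat \<Rightarrow> 'v \<Rightarrow> 'v)
    \<Rightarrow> (nat \<Rightarrow> 'v set) \<Rightarrow> bool" where
  "has_lc_quot scale n M W \<longleftrightarrow>
     (\<exists>K. module.subspace scale K \<and> K \<noteq> UNIV \<and>
          (\<forall>j<n. \<forall>v. v - M j v \<in> K) \<and>
          (\<forall>i<n. {a + b | a b. a \<in> W i \<and> b \<in> K} = UNIV))"

text \<open>A direct summand isomorphic to ker(U_X -> i'_* k_{L''}) with U nonzero:
a rho-stable decomposition V = V1 (+) V2, compatible with all stalks, with rho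
trivial on V1 and, on V1, each stalk either all of V1 (strand not on L'') or
the kernel of a nonzero functional on V1 (strand on L'').\<close>
definition has_kernel_summand :: "('k::field \<Rightarrow> 'v::ab_group_add \<Rightarrow> 'v) \<Rightarrow> nat
    \<Rightarrow> (nat \<Rightarrow> 'v \<Rightarrow> 'v) \<Rightarrow> (nat \<Rightarrow> 'v set) \<Rightarrow> bool" where
  "has_kernel_summand scale n M W \<longleftrightarrow>
     (\<exists>V1 V2. module.subspace scale V1 \<and> module.subspace scale V2 \<and>
        V1 \<noteq> {0} \<and> V1 \<inter> V2 = {0} \<and> {a + b | a b. a \<in> V1 \<and> b \<in> V2} = UNIV \<and>
        (\<forall>j<n. M j ` V2 = V2) \<and>
        (\<forall>j<n. \<forall>u\<in>V1. M j u = u) \<and>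
        (\<forall>i<n. W i = {a + b | a b. a \<in> W i \<inter> V1 \<and> b \<in> W i \<inter> V2}) \<and>
        (\<forall>i<n. W i \<inter> V1 = V1 \<or>
           (\<exists>\<phi>. Vector_Spaces.linear scale ((*) :: 'k \<Rightarrow> 'k \<Rightarrow> 'k) \<phi> \<and>
                 (\<exists>v\<in>V1. \<phi> v \<noteq> 0) \<and> W i \<inter> V1 = {v\<in>V1. \<phi> v = 0})))"

definition reduced :: "('k::field \<Rightarrow> 'v::ab_group_add \<Rightarrow> 'v) \<Rightarrow> nat \<Rightarrow> (nat \<Rightarrow> 'v \<Rightarrow> 'v)
    \<Rightarrow> (nat \<Rightarrow> 'v set) \<Rightarrow> bool" where
  "reduced scale n M W \<longleftrightarrow>
     \<not> has_lc_sub scale n M W \<and> \<not> has_lc_quot scale n M W \<and> \<not> has_kernel_summand scale n M W"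

definition V0 :: "('k::field \<Rightarrow> 'v::ab_group_add \<Rightarrow> 'v) \<Rightarrow> nat \<Rightarrow> (nat \<Rightarrow> 'v \<Rightarrow> 'v) \<Rightarrow> 'v set" where
  "V0 scale n M = module.span scale (\<Union>t<n. range (\<lambda>v. v - M t v))"

text \<open>Stable: Gamma(X,F) = 0 and F = F_0 (i.e. V_0 = V, whence W_s \<inter> V_0 = W_s).\<close>
definition stable :: "('k::field \<Rightarrow> 'v::ab_group_add \<Rightarrow> 'v) \<Rightarrow> nat \<Rightarrow> (nat \<Rightarrow> 'v \<Rightarrow> 'v)
    \<Rightarrow> (nat \<Rightarrow> 'v set) \<Rightarrow> bool" where
  "stable scale n M W \<longleftrightarrow> global_sections n M W = {0} \<and> V0 scale n M = UNIV"

definition local_trivialization :: "('k::field \<Rightarrow> 'v::ab_group_add \<Rightarrow> 'v) \<Rightarrow> nat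
    \<Rightarrow> (nat \<Rightarrow> 'v set) \<Rightarrow> (nat \<Rightarrow> 'v \<Rightarrow> 'k) \<Rightarrow> bool" where
  "local_trivialization scale n W f \<longleftrightarrow>
     (\<forall>i<n. Vector_Spaces.linear scale (*) (f i) \<and> surj (f i) \<and> W i \<subseteq> {v. f i v = 0})"

definition right_inverses :: "('k::field \<Rightarrow> 'v::ab_group_add \<Rightarrow> 'v) \<Rightarrow> nat
    \<Rightarrow> (nat \<Rightarrow> 'v \<Rightarrow> 'k) \<Rightarrow> (nat \<Rightarrow> 'k \<Rightarrow> 'v) \<Rightarrow> bool" where
  "right_inverses scale n f finv \<longleftrightarrow>
     (\<forall>j<n. Vector_Spaces.linear (*) scale (finv j) \<and> (\<forall>c. f j (finv j c) = c))"

text \<open>R_ij = eps_(F,f)(gamma_ij) = f_i o (id_V - rho(m_j)) o f_j^-1, a linear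
map k -> k, identified with its value at 1.\<close>
definition cord_matrix :: "(nat \<Rightarrow> 'v::ab_group_add \<Rightarrow> 'k::field) \<Rightarrow> (nat \<Rightarrow> 'k \<Rightarrow> 'v)
    \<Rightarrow> (nat \<Rightarrow> 'v \<Rightarrow> 'v) \<Rightarrow> nat \<Rightarrow> nat \<Rightarrow> 'k" where
  "cord_matrix f finv M i j = f i (finv j 1 - M j (finv j 1))"

end

theory Submission
  imports Defs
begin

text \<open>Each meridian monodromy \<open>M j\<close> fixes the hyperplane \<open>W j = ker f j\<close> pointwise, so
\<open>id - M j\<close> factors through \<open>f j\<close>: with \<open>u = finv j 1\<close> one has
\<open>v - M j v = f j v \<cdot> (u - M j u)\<close>, hence \<open>f i \<circ> (id - M j) = R\<^sub>i\<^sub>j \<cdot> f j\<close>.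
A zero row \<open>i\<close> therefore makes \<open>f i\<close> vanish on \<open>V\<^sub>0\<close>, which is all of \<open>V\<close> when \<open>F\<close> is stable.
For the columns: the braid action moves the meridian of a strand to a conjugate of the
meridian of the next strand of the same component, so \<open>\<rho>(m\<^sub>s) = id\<close> forces
\<open>M j = id\<close> for every strand \<open>j\<close> of \<open>K\<^sub>s\<close>.\<close>

lemma swap_adj_less: "Suc k < n \<Longrightarrow> q < n \<Longrightarrow> swap_adj k q < n"
  by (auto simp: swap_adj_def)

lemma braid_perm_snoc: "braid_perm (B @ [(k, b)]) = swap_adj k \<circ> braid_perm B"
  by (simp add: braid_perm_def)

lemma braid_act_snoc: "braid_act (B @ [g]) MW = gen_act g (braid_act B MW)"
  by (simp add: braid_act_def)

lemma valid_braid_snoc: "valid_braid n (B @ [(k, b)]) \<longleftrightarrow> valid_braid n B \<and> Suc k < n"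
  by (auto simp: valid_braid_def)

lemma braid_perm_less: "valid_braid n B \<Longrightarrow> i < n \<Longrightarrow> braid_perm B i < n"
proof (induction B rule: rev_induct)
  case Nil
  then show ?case by (simp add: braid_perm_def)
next
  case (snoc g B)
  then show ?case
    by (cases g) (simp add: braid_perm_snoc valid_braid_snoc swap_adj_less)
qed

lemma fst_gen_act:
  "fst (gen_act (k, b) (M, W)) =
     (if b then M(k := M k \<circ> M (Suc k) \<circ> inv (M k), Suc k := M k)
      else M(k := M (Suc k), Suc k := inv (M (Suc k)) \<circ> M k \<circ> M (Suc k)))"
  by (simp add: gen_act_def)

lemma gen_act_bij:
  assumes "Suc k < n" and "\<forall>i<n. bij (M i)" and "i < n"
  shows "bij (fst (gen_act (k, b) (M, W)) i)"
proof -
  have "bij (M k)" "bij (M (Suc k))" "bij (M i)"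
    using assms by auto
  then show ?thesis
    by (auto simp: fst_gen_act intro!: bij_comp bij_imp_bij_inv)
qed

lemma gen_act_id_swap_adj:
  assumes "bij (M k)" and "bij (M (Suc k))" and "M q = id"
  shows "fst (gen_act (k, b) (M, W)) (swap_adj k q) = id"
proof -
  have "M k \<circ> inv (M k) = id"
    using assms(1) bij_is_surj surj_iff by blast
  moreover have "inv (M (Suc k)) \<circ> M (Suc k) = id"
    using assms(2) by (simp add: bij_is_inj)
  ultimately show ?thesis
    using assms(3) by (auto simp: fst_gen_act swap_adj_def)
qed

lemma braid_act_bij:
  assumes "valid_braid n B" and "\<forall>i<n. bij (M i)" and "i < n"
  shows "bij (fst (braid_act B (M, W)) i)"
  using assms
proof (induction B arbitrary: i rule: rev_induct)
  case Nil
  then show ?case by (simp add: braid_act_def)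
next
  case (snoc g B)
  obtain k b where g: "g = (k, b)" by (cases g)
  obtain M' W' where MW': "braid_act B (M, W) = (M', W')" by fastforce
  have "Suc k < n" and "\<forall>i<n. bij (M' i)"
    using snoc MW' by (auto simp: g valid_braid_snoc)
  then show ?case
    using gen_act_bij \<open>i < n\<close> by (simp add: g braid_act_snoc MW')
qed

lemma braid_act_id_braid_perm:
  assumes "valid_braid n B" and "\<forall>i<n. bij (M i)" and "i < n" and "M i = id"
  shows "fst (braid_act B (M, W)) (braid_perm B i) = id"
  using assms
proof (induction B rule: rev_induct)
  case Nil
  then show ?case by (simp add: braid_act_def braid_perm_def)
next
  case (snoc g B)
  obtain k b where g: "g = (k, b)" by (cases g)
  obtain M' W' where MW': "braid_act B (M, W) = (M', W')" by fastforce
  have B: "valid_braid n B" and k: "Suc k < n"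
    using snoc.prems by (auto simp: g valid_braid_snoc)
  have "M' (braid_perm B i) = id"
    using snoc B MW' by auto
  moreover have "bij (M' k)" "bij (M' (Suc k))"
    using braid_act_bij[OF B snoc.prems(2), of _ W] k MW' by auto
  ultimately show ?case
    by (simp add: g braid_act_snoc braid_perm_snoc MW' gen_act_id_swap_adj)
qed

lemma braid_invariant_id_same_comp:
  assumes "valid_braid n B" and "\<forall>i<n. bij (M i)" and "fst (braid_act B (M, W)) = M"
    and "s < n" and "M s = id" and "same_comp B s j"
  shows "M j = id"
proof -
  have "(braid_perm B ^^ m) s < n \<and> M ((braid_perm B ^^ m) s) = id" for m
  proof (induction m)
    case 0
    then show ?case using assms(4,5) by simp
  next
    case (Suc m)
    then show ?case
      using braid_perm_less[OF assms(1)] braid_act_id_braid_perm[OF assms(1,2), of _ W] assms(3)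
      by (metis comp_apply funpow.simps(2))
  qed
  then show ?thesis
    using assms(6) unfolding same_comp_def by blast
qed

lemma hyperplane_kernel_subset:
  assumes "hyperplane scale H"
    and "Vector_Spaces.linear scale ((*) :: 'k \<Rightarrow> 'k \<Rightarrow> 'k) (f :: 'v::ab_group_add \<Rightarrow> 'k::field)"
    and "surj f" and "H \<subseteq> {v. f v = 0}"
  shows "{v. f v = 0} \<subseteq> H"
proof -
  obtain \<phi> where "Vector_Spaces.linear scale ((*) :: 'k \<Rightarrow> 'k \<Rightarrow> 'k) \<phi>" and "surj \<phi>"
    and H: "H = {v. \<phi> v = 0}"
    using assms(1) unfolding hyperplane_def by blast
  interpret f: Vector_Spaces.linear scale "(*)" f by fact
  interpret \<phi>: Vector_Spaces.linear scale "(*)" \<phi> by fact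
  obtain u where u: "\<phi> u = 1" using \<open>surj \<phi>\<close> by (metis surjD)
  have f_eq: "f y = \<phi> y * f u" for y
  proof -
    have "\<phi> (y - scale (\<phi> y) u) = 0"
      using u by (simp add: \<phi>.diff \<phi>.scale)
    then have "f (y - scale (\<phi> y) u) = 0"
      using assms(4) H by auto
    then show ?thesis
      by (simp add: f.diff f.scale)
  qed
  obtain y where "f y = 1" using \<open>surj f\<close> by (metis surjD)
  then have "f u \<noteq> 0"
    using f_eq[of y] by auto
  show ?thesis
  proof
    fix v
    assume "v \<in> {v. f v = 0}"
    then have "\<phi> v * f u = 0"
      using f_eq[of v] by simp
    with \<open>f u \<noteq> 0\<close> show "v \<in> H"
      using H by simp
  qed
qed

lemma diff_eq_scale_if_fixes_kernel:
  assumes "Vector_Spaces.linear scale scale T"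
    and "Vector_Spaces.linear scale ((*) :: 'k \<Rightarrow> 'k \<Rightarrow> 'k) (f :: 'v::ab_group_add \<Rightarrow> 'k::field)"
    and "f u = 1" and fix_ker: "\<And>w. f w = 0 \<Longrightarrow> T w = w"
  shows "v - T v = scale (f v) (u - T u)"
proof -
  interpret T: Vector_Spaces.linear scale scale T by fact
  interpret f: Vector_Spaces.linear scale "(*)" f by fact
  have "f (v - scale (f v) u) = 0"
    using \<open>f u = 1\<close> by (simp add: f.diff f.scale)
  then have "T v - scale (f v) (T u) = v - scale (f v) u"
    using fix_ker[of "v - scale (f v) u"] by (simp add: T.diff T.scale)
  then show ?thesis
    by (simp add: T.vs1.scale_right_diff_distrib algebra_simps)
qed

lemma cord_matrix_factorization:
  assumes "sheaf_data scale n B M W" and "local_trivialization scale n W f"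
    and "right_inverses scale n f finv" and "i < n" and "j < n"
  shows "f i (v - M j v) = f j v * cord_matrix f finv M i j"
proof -
  have Mj: "Vector_Spaces.linear scale scale (M j)" and "hyperplane scale (W j)"
    and fix_W: "\<forall>w\<in>W j. M j w = w"
    using assms(1,5) unfolding sheaf_data_def by auto
  have fj: "Vector_Spaces.linear scale (*) (f j)" "surj (f j)" "W j \<subseteq> {v. f j v = 0}"
    and "Vector_Spaces.linear scale (*) (f i)"
    using assms(2,4,5) unfolding local_trivialization_def by auto
  interpret f: Vector_Spaces.linear scale "(*)" "f i" by fact
  have "f j (finv j 1) = 1"
    using assms(3,5) unfolding right_inverses_def by auto
  moreover have "M j w = w" if "f j w = 0" for w
    using hyperplane_kernel_subset[OF \<open>hyperplane scale (W j)\<close> fj] fix_W that by auto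
  ultimately have "v - M j v = scale (f j v) (finv j 1 - M j (finv j 1))"
    using diff_eq_scale_if_fixes_kernel[OF Mj fj(1)] by blast
  then show ?thesis
    by (simp add: f.scale cord_matrix_def)
qed

lemma cord_matrix_eq_0_if_meridian_id:
  assumes "local_trivialization scale n W f" and "i < n" and "M j = id"
  shows "cord_matrix f finv M i j = 0"
proof -
  have "Vector_Spaces.linear scale (*) (f i)"
    using assms(1,2) unfolding local_trivialization_def by auto
  then interpret fi: Vector_Spaces.linear scale "(*)" "f i" .
  show ?thesis
    by (simp add: cord_matrix_def \<open>M j = id\<close>)
qed

lemma cord_matrix_row_nonzero_if_stable:
  assumes "sheaf_data scale n B M W" and "local_trivialization scale n W f"
    and "right_inverses scale n f finv" and "stable scale n M W" and "i < n"
  shows "\<exists>j<n. cord_matrix f finv M i j \<noteq> 0"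
proof (rule ccontr)
  assume "\<not> (\<exists>j<n. cord_matrix f finv M i j \<noteq> 0)"
  then have kills_generators: "f i w = 0" if "w \<in> (\<Union>t<n. range (\<lambda>v. v - M t v))" for w
    using that cord_matrix_factorization[OF assms(1-3,5)] by auto
  have "Vector_Spaces.linear scale (*) (f i)" "surj (f i)"
    using assms(2,5) unfolding local_trivialization_def by auto
  then interpret fi: Vector_Spaces.linear scale "(*)" "f i"
    by simp
  obtain v where "f i v = 1"
    using \<open>surj (f i)\<close> by (metis surjD)
  moreover have "v \<in> module.span scale (\<Union>t<n. range (\<lambda>v. v - M t v))"
    using assms(4) unfolding stable_def V0_def by simp
  then have "f i v = 0"
    using fi.eq_0_on_span[OF kills_generators] by blast
  ultimately show False
    by simp
qed

theorem proposition4p10: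
  fixes scale :: "'k::field \<Rightarrow> 'v::ab_group_add \<Rightarrow> 'v"
    and n :: nat and B :: "(nat \<times> bool) list"
    and M :: "nat \<Rightarrow> 'v \<Rightarrow> 'v" and W :: "nat \<Rightarrow> 'v set"
    and f :: "nat \<Rightarrow> 'v \<Rightarrow> 'k" and finv :: "nat \<Rightarrow> 'k \<Rightarrow> 'v"
  assumes "vector_space scale"
    and "1 \<le> n"
    and "valid_braid n B"
    and "sheaf_data scale n B M W"
    and "reduced scale n M W"
    and "local_trivialization scale n W f"
    and "right_inverses scale n f finv"
  shows "(\<forall>s<n. M s = id \<longrightarrow>
            (\<forall>j<n. same_comp B s j \<longrightarrow> (\<forall>i<n. cord_matrix f finv M i j = 0)))
       \<and> (stable scale n M W \<longrightarrow> (\<forall>i<n. \<exists>j<n. cord_matrix f finv M i j \<noteq> 0))"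
proof (intro conjI allI impI)
  fix s j i
  assume "s < n" "M s = id" "j < n" "same_comp B s j" "i < n"
  moreover have "\<forall>i<n. bij (M i)" "fst (braid_act B (M, W)) = M"
    using assms(4) unfolding sheaf_data_def by auto
  ultimately have "M j = id"
    using braid_invariant_id_same_comp[OF assms(3)] by blast
  then show "cord_matrix f finv M i j = 0"
    using cord_matrix_eq_0_if_meridian_id[OF assms(6) \<open>i < n\<close>] by blast
next
  fix i
  assume "stable scale n M W" "i < n"
  then show "\<exists>j<n. cord_matrix f finv M i j \<noteq> 0"
    using cord_matrix_row_nonzero_if_stable[OF assms(4,6,7)] by blast
qed

end
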